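(* For all graphs $H$ and $\Gamma$, we have $$\mathrm{ex}(\Gamma,\mathcal{P}_H)\ \ge\ \frac{1}{2}\,e(\Gamma)\,\mathrm{ex}(\chi(\overline{\Gamma}),\mathcal{F}_H)\Big/\binom{\chi(\overline{\Gamma})}{2}.$$
   Context: $\mathcal{P}_H$ is the property of not containing $H$ as an induced subgraph; $\mathrm{ex}(\Gamma,\mathcal{P})$ is the maximum number of edges of a subgraph $G\subseteq\Gamma$ that belongs to $\mathcal{P}$. For a family $\mathcal{F}$ of graphs, $\mathrm{ex}(k,\mathcal{F})$ is the maximum number of edges in a $k$-vertex graph containing no member of $\mathcal{F}$ as a subgraph. For a vertex partition $V(H)=V_1\sqcup\dots\sqcup V_k$ into cliques of $H$, the clique quotient is the graph on $\{1,\dots,k\}$ in which $i\ne j$ are adjacent if some vertex of $V_i$ is adjacent to some vertex of $V_j$; $\mathcal{F}_H$ is the family of bipartite graphs that are clique quotients of $H$. $\overline{\Gamma}$ is the complement of $\Gamma$ and $\chi$ denotes chromatic number. *)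

theory Defs
  imports Complex_Main
begin

type_synonym 'a graph = "'a set \<times> 'a set set"

abbreviation verts :: "'a graph \<Rightarrow> 'a set" where "verts G \<equiv> fst G"
abbreviation edges :: "'a graph \<Rightarrow> 'a set set" where "edges G \<equiv> snd G"

definition graph :: "'a graph \<Rightarrow> bool" where
  "graph G \<longleftrightarrow> finite (verts G) \<and> (\<forall>e\<in>edges G. e \<subseteq> verts G \<and> card e = 2)"

definition num_edges :: "'a graph \<Rightarrow> nat" where
  "num_edges G = card (edges G)"

definition complement :: "'a graph \<Rightarrow> 'a graph" where
  "complement G = (verts G,
     {{u, v} | u v. u \<in> verts G \<and> v \<in> verts G \<and> u \<noteq> v \<and> {u, v} \<notin> edges G})"

definition proper_colouring :: "'a graph \<Rightarrow> ('a \<Rightarrow> 'c) \<Rightarrow> bool" where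
  "proper_colouring G c \<longleftrightarrow>
     (\<forall>u\<in>verts G. \<forall>v\<in>verts G. {u, v} \<in> edges G \<longrightarrow> c u \<noteq> c v)"

definition chromatic_number :: "'a graph \<Rightarrow> nat" where
  "chromatic_number G =
     (LEAST k. \<exists>c :: 'a \<Rightarrow> nat. proper_colouring G c \<and> (\<forall>v\<in>verts G. c v < k))"

definition bipartite :: "'a graph \<Rightarrow> bool" where
  "bipartite G \<longleftrightarrow> (\<exists>c :: 'a \<Rightarrow> bool. proper_colouring G c)"

definition contains_subgraph :: "'b graph \<Rightarrow> 'a graph \<Rightarrow> bool" where
  "contains_subgraph G H \<longleftrightarrow>
     (\<exists>f. inj_on f (verts H) \<and> f ` verts H \<subseteq> verts G \<and>
          (\<forall>u\<in>verts H. \<forall>v\<in>verts H. {u, v} \<in> edges H \<longrightarrow> {f u, f v} \<in> edges G))"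

definition contains_induced :: "'b graph \<Rightarrow> 'a graph \<Rightarrow> bool" where
  "contains_induced G H \<longleftrightarrow>
     (\<exists>f. inj_on f (verts H) \<and> f ` verts H \<subseteq> verts G \<and>
          (\<forall>u\<in>verts H. \<forall>v\<in>verts H. {u, v} \<in> edges H \<longleftrightarrow> {f u, f v} \<in> edges G))"

definition P_ind_free :: "'a graph \<Rightarrow> 'b graph \<Rightarrow> bool" where
  "P_ind_free H G \<longleftrightarrow> \<not> contains_induced G H"

definition subgraph_of :: "'a graph \<Rightarrow> 'a graph \<Rightarrow> bool" where
  "subgraph_of G \<Gamma> \<longleftrightarrow> verts G = verts \<Gamma> \<and> edges G \<subseteq> edges \<Gamma>"

text \<open>ex(\<Gamma>, P): maximum number of edges of a subgraph of \<Gamma> with property P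
  (Sup over nat, so 0 if no such subgraph exists).\<close>
definition ex_prop :: "'a graph \<Rightarrow> ('a graph \<Rightarrow> bool) \<Rightarrow> nat" where
  "ex_prop \<Gamma> P = Sup {num_edges G | G. graph G \<and> subgraph_of G \<Gamma> \<and> P G}"

text \<open>ex(k, F): maximum number of edges of a k-vertex graph (vertex set {1..k})
  containing no member of F as a subgraph (0 if there is none).\<close>
definition ex_fam :: "nat \<Rightarrow> 'b graph set \<Rightarrow> nat" where
  "ex_fam k F = Sup {num_edges G | G :: nat graph. graph G \<and> verts G = {1..k} \<and>
                       (\<forall>F'\<in>F. \<not> contains_subgraph G F')}"

text \<open>A partition of V(H) into k nonempty cliques V_1,...,V_k, encoded by the map
  p sending a vertex to the index of its part.\<close>
definition clique_partition :: "'a graph \<Rightarrow> nat \<Rightarrow> ('a \<Rightarrow> nat) \<Rightarrow> bool" where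
  "clique_partition H k p \<longleftrightarrow> p ` verts H = {1..k} \<and>
     (\<forall>u\<in>verts H. \<forall>v\<in>verts H. u \<noteq> v \<and> p u = p v \<longrightarrow> {u, v} \<in> edges H)"

definition clique_quotient :: "'a graph \<Rightarrow> nat \<Rightarrow> ('a \<Rightarrow> nat) \<Rightarrow> nat graph" where
  "clique_quotient H k p = ({1..k},
     {{i, j} | i j. i \<noteq> j \<and> (\<exists>u\<in>verts H. \<exists>v\<in>verts H. p u = i \<and> p v = j \<and> {u, v} \<in> edges H)})"

definition F_fam :: "'a graph \<Rightarrow> nat graph set" where
  "F_fam H = {Q. \<exists>k p. clique_partition H k p \<and> Q = clique_quotient H k p \<and> bipartite Q}"

end

(*
  Colour \<Gamma> properly in its complement with k = \<chi>(complement \<Gamma>) colours, so that every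
  colour class is a clique of \<Gamma>. Take an F_H-free graph G on the k colours with ex(k, F_H)
  edges and a bipartite subgraph B of G with at least half of its edges. For a permutation
  \<sigma> of the colours keep the edges of \<Gamma> inside colour classes and those between two classes
  whose \<sigma>-image is an edge of B. An induced copy of H in this subgraph is partitioned into
  cliques by the colour classes, and the quotient is a bipartite graph embedded in B, hence in
  G, which is impossible. Averaging over \<sigma>, every edge between classes is kept for a fraction
  e(B) / (k choose 2) of all permutations, so some \<sigma> keeps at least
  e(\<Gamma>) e(B) / (k choose 2) >= e(\<Gamma>) ex(k, F_H) / (2 (k choose 2)) edges.
*)

theory Submission
  imports Defs "HOL-Combinatorics.Permutations"
begin

lemma finite_edges: "graph G \<Longrightarrow> finite (edges G)"
  unfolding graph_def by (metis Pow_iff finite_Pow_iff finite_subset subsetI)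

definition cut_edges :: "('a \<Rightarrow> bool) \<Rightarrow> 'a set set \<Rightarrow> 'a set set" where
  "cut_edges c E = {e \<in> E. \<exists>x\<in>e. \<exists>y\<in>e. c x \<noteq> c y}"

lemma cut_edges_Un: "cut_edges c (E \<union> E') = cut_edges c E \<union> cut_edges c E'"
  unfolding cut_edges_def by blast

lemma cut_edges_subset: "cut_edges c E \<subseteq> E"
  unfolding cut_edges_def by blast

lemma doubleton_in_cut_edges_iff: "{x, y} \<in> cut_edges c E \<longleftrightarrow> {x, y} \<in> E \<and> c x \<noteq> c y"
  unfolding cut_edges_def by blast

lemma exists_large_cut:
  assumes "finite V" "\<forall>e\<in>E. e \<subseteq> V \<and> card e = 2"
  shows "\<exists>c. card E \<le> 2 * card (cut_edges c E)"
  using assms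
proof (induction V arbitrary: E rule: finite_induct)
  case empty
  then have "E = {}"
    by (metis card.empty subset_empty zero_neq_numeral ex_in_conv)
  then show ?case
    by simp
next
  case (insert v W)
  define E0 where "E0 = {e \<in> E. v \<notin> e}"
  define E1 where "E1 = {e \<in> E. v \<in> e}"
  have "finite E"
    using insert.hyps(1) insert.prems by (meson Pow_iff finite_Pow_iff finite_insert finite_subset subsetI)
  then have fin: "finite E0" "finite E1"
    unfolding E0_def E1_def by simp_all
  have E_split: "E = E0 \<union> E1" "E0 \<inter> E1 = {}"
    unfolding E0_def E1_def by auto
  obtain c where c: "card E0 \<le> 2 * card (cut_edges c E0)"
    using insert.IH[of E0] insert.prems unfolding E0_def by blast
  have cut_E0: "cut_edges (c(v := b)) E0 = cut_edges c E0" for b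
    unfolding cut_edges_def E0_def by auto
  have cut_E1: "e \<in> cut_edges (c(v := True)) E1 \<longleftrightarrow> e \<notin> cut_edges (c(v := False)) E1"
    if "e \<in> E1" for e
  proof -
    have "v \<in> e" "card e = 2"
      using that insert.prems unfolding E1_def by auto
    then obtain w where "e = {v, w}" "w \<noteq> v"
      by (metis card_2_iff insert_commute insertE singletonD)
    then show ?thesis
      using that by (simp add: doubleton_in_cut_edges_iff)
  qed
  have "cut_edges (c(v := True)) E1 \<union> cut_edges (c(v := False)) E1 = E1"
    using cut_E1 cut_edges_subset by blast
  moreover have "cut_edges (c(v := True)) E1 \<inter> cut_edges (c(v := False)) E1 = {}"
    using cut_E1 cut_edges_subset by blast
  ultimately have "card (cut_edges (c(v := True)) E1) + card (cut_edges (c(v := False)) E1) = card E1"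
    using fin(2) by (metis card_Un_disjoint cut_edges_subset finite_subset)
  then have "card E1 \<le> 2 * card (cut_edges (c(v := True)) E1)
      \<or> card E1 \<le> 2 * card (cut_edges (c(v := False)) E1)"
    by linarith
  then obtain b where "card E1 \<le> 2 * card (cut_edges (c(v := b)) E1)"
    by blast
  moreover have "card (cut_edges d E) = card (cut_edges d E0) + card (cut_edges d E1)" for d
  proof -
    have "cut_edges d E0 \<inter> cut_edges d E1 = {}"
      using E_split(2) cut_edges_subset by blast
    then show ?thesis
      using E_split(1) fin by (simp add: cut_edges_Un card_Un_disjoint finite_subset[OF cut_edges_subset])
  qed
  ultimately have "card E \<le> 2 * card (cut_edges (c(v := b)) E)"
    using c cut_E0 E_split fin by (simp add: card_Un_disjoint)
  then show ?case by blast
qed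

lemma exists_bipartite_subgraph_half_edges:
  assumes "graph G"
  obtains B where "graph B" "subgraph_of B G" "bipartite B" "num_edges G \<le> 2 * num_edges B"
proof -
  have "finite (verts G)" "\<forall>e\<in>edges G. e \<subseteq> verts G \<and> card e = 2"
    using assms unfolding graph_def by auto
  then obtain c where c: "card (edges G) \<le> 2 * card (cut_edges c (edges G))"
    using exists_large_cut by blast
  let ?B = "(verts G, cut_edges c (edges G))"
  have "proper_colouring ?B c"
    unfolding proper_colouring_def by (simp add: doubleton_in_cut_edges_iff)
  moreover have "graph ?B"
    using assms cut_edges_subset[of c "edges G"] unfolding graph_def by auto
  moreover have "subgraph_of ?B G"
    unfolding subgraph_of_def by (simp add: cut_edges_subset)
  ultimately show thesis
    using that[of ?B] c unfolding bipartite_def num_edges_def by auto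
qed

lemma contains_subgraph_subgraph_of:
  assumes "subgraph_of B G" "contains_subgraph B F"
  shows "contains_subgraph G F"
proof -
  obtain f where "inj_on f (verts F)" "f ` verts F \<subseteq> verts B"
    "\<forall>u\<in>verts F. \<forall>v\<in>verts F. {u, v} \<in> edges F \<longrightarrow> {f u, f v} \<in> edges B"
    using assms(2) unfolding contains_subgraph_def by blast
  with assms(1) show ?thesis
    unfolding contains_subgraph_def subgraph_of_def by (intro exI[of _ f]) auto
qed

lemma permutes_exists_image_eq:
  assumes "finite T" "A \<subseteq> T" "B \<subseteq> T" "card A = card B"
  obtains \<tau> where "\<tau> permutes T" "\<tau> ` A = B"
proof -
  have "finite A" "finite B"
    using assms finite_subset by auto
  then obtain f where f: "bij_betw f A B"
    using assms(4) finite_same_card_bij by blast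
  have "card (T - A) = card (T - B)"
    using assms \<open>finite A\<close> \<open>finite B\<close> by (simp add: card_Diff_subset)
  then obtain g where g: "bij_betw g (T - A) (T - B)"
    using assms(1) finite_same_card_bij by (metis finite_Diff)
  define \<tau> where "\<tau> x = (if x \<in> A then f x else if x \<in> T then g x else x)" for x
  have "bij_betw \<tau> A B"
    using f by (rule bij_betw_cong[THEN iffD1, rotated]) (simp add: \<tau>_def)
  moreover have "bij_betw \<tau> (T - A) (T - B)"
    using g by (rule bij_betw_cong[THEN iffD1, rotated]) (simp add: \<tau>_def)
  ultimately have "bij_betw \<tau> (A \<union> (T - A)) (B \<union> (T - B))"
    by (rule bij_betw_combine) blast
  then have "bij_betw \<tau> T T"
    using assms(2,3) by (simp add: Un_absorb1)
  then have "\<tau> permutes T"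
    by (rule bij_imp_permutes) (use assms(2) in \<open>auto simp: \<tau>_def\<close>)
  with \<open>bij_betw \<tau> A B\<close> show thesis
    using that bij_betw_imp_surj_on by blast
qed

lemma card_permutes_image_eq:
  assumes "finite T" "A \<subseteq> T" "B \<subseteq> T" "card B = card A"
  shows "card {\<sigma>. \<sigma> permutes T \<and> \<sigma> ` A = B} = card {\<sigma>. \<sigma> permutes T \<and> \<sigma> ` A = A}"
proof -
  obtain \<tau> where \<tau>: "\<tau> permutes T" "\<tau> ` A = B"
    by (rule permutes_exists_image_eq[OF assms(1-3) assms(4)[symmetric]])
  have "card {\<sigma>. \<sigma> permutes T \<and> \<sigma> ` A = B} = (\<Sum>\<sigma> | \<sigma> permutes T. if \<sigma> ` A = B then 1 else 0)"
    using finite_permutations[OF assms(1)] by (simp add: sum.If_cases Int_def conj_commute)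
  also have "\<dots> = (\<Sum>\<sigma> | \<sigma> permutes T. if (\<tau> \<circ> \<sigma>) ` A = B then 1 else 0)"
    by (rule setum_permutations_compose_left[OF \<tau>(1)])
  also have "\<dots> = (\<Sum>\<sigma> | \<sigma> permutes T. if \<sigma> ` A = A then 1 else 0)"
  proof -
    have "(\<tau> \<circ> \<sigma>) ` A = B \<longleftrightarrow> \<sigma> ` A = A" for \<sigma>
      using \<tau>(2) permutes_inj[OF \<tau>(1)] by (metis image_comp inj_image_eq_iff)
    then show ?thesis
      by simp
  qed
  also have "\<dots> = card {\<sigma>. \<sigma> permutes T \<and> \<sigma> ` A = A}"
    using finite_permutations[OF assms(1)] by (simp add: sum.If_cases Int_def conj_commute)
  finally show ?thesis .
qed

lemma card_permutes_image_in:
  assumes "finite T" "A \<subseteq> T" "\<B> \<subseteq> {B. B \<subseteq> T \<and> card B = card A}"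
  shows "card {\<sigma>. \<sigma> permutes T \<and> \<sigma> ` A \<in> \<B>} * (card T choose card A) = card \<B> * fact (card T)"
proof -
  define S where "S = {B. B \<subseteq> T \<and> card B = card A}"
  define N where "N = card {\<sigma>. \<sigma> permutes T \<and> \<sigma> ` A = A}"
  have "finite S"
    unfolding S_def using assms(1) by simp
  have fibres: "card {\<sigma>. \<sigma> permutes T \<and> \<sigma> ` A \<in> \<X>} = card \<X> * N" if "\<X> \<subseteq> S" for \<X>
  proof -
    have "finite \<X>"
      using finite_subset[OF that \<open>finite S\<close>] .
    have "{\<sigma>. \<sigma> permutes T \<and> \<sigma> ` A \<in> \<X>} = (\<Union>B\<in>\<X>. {\<sigma>. \<sigma> permutes T \<and> \<sigma> ` A = B})"
      by blast
    also have "card \<dots> = (\<Sum>B\<in>\<X>. card {\<sigma>. \<sigma> permutes T \<and> \<sigma> ` A = B})"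
      using \<open>finite \<X>\<close> finite_permutations[OF assms(1)] by (intro card_UN_disjoint) auto
    also have "\<dots> = (\<Sum>B\<in>\<X>. N)"
      using that assms(1,2) unfolding S_def N_def by (intro sum.cong refl card_permutes_image_eq) auto
    finally show ?thesis
      by simp
  qed
  have "{\<sigma>. \<sigma> permutes T \<and> \<sigma> ` A \<in> S} = {\<sigma>. \<sigma> permutes T}"
    using assms(2) permutes_image[of _ T] permutes_inj_on[of _ T]
    unfolding S_def by (auto simp: card_image inj_on_subset)
  then have "fact (card T) = (card T choose card A) * N"
    using fibres[of S] card_permutations[OF refl assms(1)] n_subsets[OF assms(1)] unfolding S_def by simp
  with fibres[of \<B>] assms(3) show ?thesis
    unfolding S_def by simp
qed

lemma sum_card_permutes_image_in:
  assumes "finite T" "finite I" "\<forall>i\<in>I. A i \<subseteq> T \<and> card (A i) = r"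
    and "\<B> \<subseteq> {B. B \<subseteq> T \<and> card B = r}"
  shows "(\<Sum>\<sigma> | \<sigma> permutes T. card {i\<in>I. \<sigma> ` A i \<in> \<B>}) * (card T choose r)
           = card I * card \<B> * fact (card T)"
proof -
  have "(\<Sum>\<sigma> | \<sigma> permutes T. card {i\<in>I. \<sigma> ` A i \<in> \<B>})
          = (\<Sum>\<sigma> | \<sigma> permutes T. \<Sum>i\<in>I. if \<sigma> ` A i \<in> \<B> then 1 else 0)"
    using assms(2) by (simp add: sum.If_cases Int_def)
  also have "\<dots> = (\<Sum>i\<in>I. \<Sum>\<sigma> | \<sigma> permutes T. if \<sigma> ` A i \<in> \<B> then 1 else 0)"
    by (rule sum.swap)
  also have "\<dots> = (\<Sum>i\<in>I. card {\<sigma>. \<sigma> permutes T \<and> \<sigma> ` A i \<in> \<B>})"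
    using finite_permutations[OF assms(1)] by (simp add: sum.If_cases Int_def conj_commute)
  finally have "(\<Sum>\<sigma> | \<sigma> permutes T. card {i\<in>I. \<sigma> ` A i \<in> \<B>}) * (card T choose r)
      = (\<Sum>i\<in>I. card {\<sigma>. \<sigma> permutes T \<and> \<sigma> ` A i \<in> \<B>} * (card T choose card (A i)))"
    using assms(3) by (simp add: sum_distrib_right)
  also have "\<dots> = (\<Sum>i\<in>I. card \<B> * fact (card T))"
    using assms(1,3,4) by (intro sum.cong refl card_permutes_image_in) auto
  finally show ?thesis
    by simp
qed

lemma exists_permutes_many_images_in:
  assumes "finite T" "finite I" "\<forall>i\<in>I. A i \<subseteq> T \<and> card (A i) = r"
    and "\<B> \<subseteq> {B. B \<subseteq> T \<and> card B = r}"
  shows "\<exists>\<sigma>. \<sigma> permutes T \<and> card I * card \<B> \<le> card {i\<in>I. \<sigma> ` A i \<in> \<B>} * (card T choose r)"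
proof (rule ccontr)
  assume "\<not> ?thesis"
  then have "(\<Sum>\<sigma> | \<sigma> permutes T. card {i\<in>I. \<sigma> ` A i \<in> \<B>} * (card T choose r))
      < of_nat (card {\<sigma>. \<sigma> permutes T}) * (card I * card \<B>)"
    using finite_permutations[OF assms(1)]
    by (intro sum_bounded_above_strict) (auto simp: card_gt_0_iff not_le intro: permutes_id)
  then show False
    using sum_card_permutes_image_in[OF assms] card_permutations[OF refl assms(1)]
    by (simp add: sum_distrib_right[symmetric])
qed

definition pattern_subgraph :: "'b graph \<Rightarrow> ('b \<Rightarrow> 'c) \<Rightarrow> 'c graph \<Rightarrow> 'b graph" where
  "pattern_subgraph \<Gamma> c B = (verts \<Gamma>, {e \<in> edges \<Gamma>. card (c ` e) = 1 \<or> c ` e \<in> edges B})"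

lemma clique_quotient_edgeE:
  assumes "e \<in> edges (clique_quotient H k p)"
  obtains u v where "e = {p u, p v}" "p u \<noteq> p v" "u \<in> verts H" "v \<in> verts H" "{u, v} \<in> edges H"
  using assms unfolding clique_quotient_def by auto

lemma bipartite_contains_clique_quotient:
  fixes H :: "'a graph" and B :: "'c graph" and h :: "'a \<Rightarrow> 'c"
  assumes "finite (verts H)" "bipartite B" "h ` verts H \<subseteq> verts B"
    and fibres: "\<And>u v. u \<in> verts H \<Longrightarrow> v \<in> verts H \<Longrightarrow> u \<noteq> v \<Longrightarrow> h u = h v \<Longrightarrow> {u, v} \<in> edges H"
    and cross_edges: "\<And>u v. u \<in> verts H \<Longrightarrow> v \<in> verts H \<Longrightarrow> {u, v} \<in> edges H \<Longrightarrow> h u \<noteq> h v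
                        \<Longrightarrow> {h u, h v} \<in> edges B"
  shows "\<exists>Q\<in>F_fam H. contains_subgraph B Q"
proof -
  define k where "k = card (h ` verts H)"
  obtain g where g: "bij_betw g {1..k} (h ` verts H)"
    using ex_bij_betw_nat_finite_1 assms(1) unfolding k_def by blast
  define p where "p u = inv_into {1..k} g (h u)" for u
  have g_p: "g (p u) = h u" if "u \<in> verts H" for u
    using g that unfolding p_def by (simp add: bij_betw_inv_into_right)
  have "p ` verts H = {1..k}"
    using bij_betw_inv_into[OF g] unfolding p_def bij_betw_def by (simp add: image_image)
  moreover have "{u, v} \<in> edges H" if "u \<in> verts H" "v \<in> verts H" "u \<noteq> v" "p u = p v" for u v
    using fibres g_p that by metis
  ultimately have partition: "clique_partition H k p"
    unfolding clique_partition_def by blast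
  define Q where "Q = clique_quotient H k p"
  have Q_edges: "g ` e \<in> edges B" if "e \<in> edges Q" for e
  proof -
    obtain u v where uv: "e = {p u, p v}" "p u \<noteq> p v" "u \<in> verts H" "v \<in> verts H" "{u, v} \<in> edges H"
      using \<open>e \<in> edges Q\<close> unfolding Q_def by (rule clique_quotient_edgeE)
    then have "h u \<noteq> h v"
      unfolding p_def by metis
    then show ?thesis
      using cross_edges uv g_p by simp
  qed
  obtain cb :: "'c \<Rightarrow> bool" where cb: "proper_colouring B cb"
    using assms(2) unfolding bipartite_def by blast
  have g_verts: "g ` verts Q \<subseteq> verts B"
    using g assms(3) unfolding Q_def clique_quotient_def bij_betw_def by simp
  have "proper_colouring Q (cb \<circ> g)"
    unfolding proper_colouring_def
  proof (intro ballI impI)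
    fix i j assume "i \<in> verts Q" "j \<in> verts Q" "{i, j} \<in> edges Q"
    then show "(cb \<circ> g) i \<noteq> (cb \<circ> g) j"
      using cb Q_edges[of "{i, j}"] g_verts unfolding proper_colouring_def by auto
  qed
  then have "Q \<in> F_fam H"
    using partition unfolding F_fam_def Q_def bipartite_def by blast
  moreover have "contains_subgraph B Q"
    unfolding contains_subgraph_def
  proof (intro exI[of _ g] conjI ballI impI)
    show "inj_on g (verts Q)"
      using g unfolding Q_def clique_quotient_def bij_betw_def by simp
    show "g ` verts Q \<subseteq> verts B"
      by (fact g_verts)
    fix i j assume "i \<in> verts Q" "j \<in> verts Q" "{i, j} \<in> edges Q"
    then show "{g i, g j} \<in> edges B"
      using Q_edges[of "{i, j}"] by simp
  qed
  ultimately show ?thesis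
    by blast
qed

lemma P_ind_free_pattern_subgraph:
  assumes "finite (verts H)"
    and cliques: "\<And>u v. u \<in> verts \<Gamma> \<Longrightarrow> v \<in> verts \<Gamma> \<Longrightarrow> u \<noteq> v \<Longrightarrow> c u = c v \<Longrightarrow> {u, v} \<in> edges \<Gamma>"
    and "c ` verts \<Gamma> \<subseteq> verts B" "bipartite B" "\<forall>Q\<in>F_fam H. \<not> contains_subgraph B Q"
  shows "P_ind_free H (pattern_subgraph \<Gamma> c B)"
  unfolding P_ind_free_def
proof
  assume "contains_induced (pattern_subgraph \<Gamma> c B) H"
  then obtain f where f: "inj_on f (verts H)" "f ` verts H \<subseteq> verts \<Gamma>"
    and f_edges: "\<And>u v. u \<in> verts H \<Longrightarrow> v \<in> verts H
                    \<Longrightarrow> {u, v} \<in> edges H \<longleftrightarrow> {f u, f v} \<in> edges (pattern_subgraph \<Gamma> c B)"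
    unfolding contains_induced_def pattern_subgraph_def by auto
  have "\<exists>Q\<in>F_fam H. contains_subgraph B Q"
  proof (rule bipartite_contains_clique_quotient[where h = "c \<circ> f"])
    show "(c \<circ> f) ` verts H \<subseteq> verts B"
      using f(2) assms(3) by auto
    fix u v assume uv: "u \<in> verts H" "v \<in> verts H"
    show "{u, v} \<in> edges H" if "u \<noteq> v" "(c \<circ> f) u = (c \<circ> f) v"
    proof -
      have "f u \<noteq> f v"
        using f(1) uv that(1) by (meson inj_on_eq_iff)
      then have "{f u, f v} \<in> edges \<Gamma>"
        using cliques f(2) uv that(2) by auto
      then show ?thesis
        using f_edges[OF uv] that(2) by (simp add: pattern_subgraph_def)
    qed
    show "{(c \<circ> f) u, (c \<circ> f) v} \<in> edges B" if "{u, v} \<in> edges H" "(c \<circ> f) u \<noteq> (c \<circ> f) v"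
      using f_edges[OF uv] that by (simp add: pattern_subgraph_def)
  qed (use assms(1,4) in auto)
  with assms(5) show False
    by blast
qed

lemma card_image_card_2_cases:
  assumes "card e = 2"
  shows "card (c ` e) = 1 \<or> card (c ` e) = 2"
proof -
  have "finite e" "e \<noteq> {}"
    using assms by (auto intro: card_ge_0_finite)
  then have "0 < card (c ` e)"
    by (simp add: card_gt_0_iff)
  moreover have "card (c ` e) \<le> 2"
    using assms card_image_le[of e c] \<open>finite e\<close> by simp
  ultimately show ?thesis
    by linarith
qed

lemma exists_permutes_large_pattern_subgraph:
  assumes "graph \<Gamma>" "finite T" "c ` verts \<Gamma> \<subseteq> T" "\<forall>e\<in>edges B. e \<subseteq> T \<and> card e = 2"
  shows "\<exists>\<sigma>. \<sigma> permutes T \<and>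
           num_edges \<Gamma> * num_edges B \<le> num_edges (pattern_subgraph \<Gamma> (\<sigma> \<circ> c) B) * (card T choose 2)"
proof -
  define Em where "Em = {e \<in> edges \<Gamma>. card (c ` e) = 1}"
  define Ec where "Ec = {e \<in> edges \<Gamma>. card (c ` e) = 2}"
  have edges_card: "\<forall>e\<in>edges \<Gamma>. e \<subseteq> verts \<Gamma> \<and> card e = 2"
    using assms(1) unfolding graph_def by simp
  have fin: "finite Em" "finite Ec"
    using finite_edges[OF assms(1)] unfolding Em_def Ec_def by simp_all
  have B_edges: "edges B \<subseteq> {A. A \<subseteq> T \<and> card A = 2}"
    using assms(4) by blast
  have "\<exists>\<sigma>. \<sigma> permutes T \<and>
      card Ec * card (edges B) \<le> card {e \<in> Ec. \<sigma> ` c ` e \<in> edges B} * (card T choose 2)"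
    using edges_card assms(3)
    by (intro exists_permutes_many_images_in[OF assms(2) fin(2) _ B_edges]) (auto simp: Ec_def)
  then obtain \<sigma> where \<sigma>: "\<sigma> permutes T"
    and many: "card Ec * card (edges B) \<le> card {e \<in> Ec. \<sigma> ` c ` e \<in> edges B} * (card T choose 2)"
    by blast
  have card_colours: "card ((\<sigma> \<circ> c) ` e) = card (c ` e)" for e
    using inj_on_subset[OF permutes_inj[OF \<sigma>] subset_UNIV] by (simp add: card_image flip: image_image)
  define K where "K = {e \<in> Ec. \<sigma> ` c ` e \<in> edges B}"
  then have "edges (pattern_subgraph \<Gamma> (\<sigma> \<circ> c) B) = Em \<union> K"
    using edges_card card_image_card_2_cases assms(4) card_colours
    unfolding pattern_subgraph_def Em_def Ec_def by (auto simp: image_comp)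
  moreover have "Em \<inter> K = {}"
    unfolding Em_def Ec_def K_def by auto
  ultimately have kept: "num_edges (pattern_subgraph \<Gamma> (\<sigma> \<circ> c) B) = card Em + card K"
    unfolding num_edges_def using fin by (simp add: card_Un_disjoint K_def)
  have "edges \<Gamma> = Em \<union> Ec"
    using edges_card card_image_card_2_cases unfolding Em_def Ec_def by blast
  moreover have "Em \<inter> Ec = {}"
    unfolding Em_def Ec_def by auto
  ultimately have all: "num_edges \<Gamma> = card Em + card Ec"
    unfolding num_edges_def using fin by (simp add: card_Un_disjoint)
  have "num_edges B \<le> card T choose 2"
    using card_mono[OF _ B_edges] n_subsets[OF assms(2)] assms(2)
    unfolding num_edges_def by simp
  have "num_edges \<Gamma> * num_edges B = card Em * num_edges B + card Ec * num_edges B"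
    by (simp add: all distrib_right)
  also have "\<dots> \<le> card Em * (card T choose 2) + card K * (card T choose 2)"
    using \<open>num_edges B \<le> card T choose 2\<close> many[folded K_def num_edges_def] by (intro add_mono) simp_all
  also have "\<dots> = num_edges (pattern_subgraph \<Gamma> (\<sigma> \<circ> c) B) * (card T choose 2)"
    by (simp add: kept distrib_right)
  finally have "num_edges \<Gamma> * num_edges B \<le> num_edges (pattern_subgraph \<Gamma> (\<sigma> \<circ> c) B) * (card T choose 2)" .
  with \<sigma> show ?thesis
    by blast
qed

lemma num_edges_le_ex_prop:
  assumes "graph \<Gamma>" "graph G" "subgraph_of G \<Gamma>" "P G"
  shows "num_edges G \<le> ex_prop \<Gamma> P"
proof -
  have "{num_edges G | G. graph G \<and> subgraph_of G \<Gamma> \<and> P G} \<subseteq> {..num_edges \<Gamma>}"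
    using finite_edges[OF assms(1)] unfolding subgraph_of_def num_edges_def by (auto intro: card_mono)
  then have "finite {num_edges G | G. graph G \<and> subgraph_of G \<Gamma> \<and> P G}"
    by (rule finite_subset) simp
  moreover have "num_edges G \<in> {num_edges G | G. graph G \<and> subgraph_of G \<Gamma> \<and> P G}"
    using assms(2-4) by blast
  ultimately show ?thesis
    unfolding ex_prop_def by (rule le_cSup_finite)
qed

lemma ex_fam_attained:
  assumes "ex_fam k F \<noteq> 0"
  obtains G :: "nat graph" where "graph G" "verts G = {1..k}" "\<forall>F'\<in>F. \<not> contains_subgraph G F'"
    "num_edges G = ex_fam k F"
proof -
  define S where "S = {num_edges G | G :: nat graph. graph G \<and> verts G = {1..k} \<and>
                         (\<forall>F'\<in>F. \<not> contains_subgraph G F')}"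
  have "S \<subseteq> {..card (Pow {1..k})}"
    unfolding S_def num_edges_def graph_def by (auto intro: card_mono)
  then have "finite S"
    by (rule finite_subset) simp
  moreover have "S \<noteq> {}"
    using assms unfolding ex_fam_def S_def[symmetric] by auto
  ultimately have "ex_fam k F \<in> S"
    unfolding ex_fam_def S_def[symmetric] by (simp add: cSup_eq_Max)
  then obtain G :: "nat graph" where "ex_fam k F = num_edges G" "graph G" "verts G = {1..k}"
    "\<forall>F'\<in>F. \<not> contains_subgraph G F'"
    unfolding S_def by blast
  then show thesis
    using that[of G] by simp
qed

lemma verts_complement [simp]: "verts (complement \<Gamma>) = verts \<Gamma>"
  by (simp add: complement_def)

lemma graph_complement: "finite (verts \<Gamma>) \<Longrightarrow> graph (complement \<Gamma>)"
  unfolding graph_def complement_def by auto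

lemma exists_chromatic_colouring:
  assumes "graph G"
  obtains c :: "'a \<Rightarrow> nat" where "proper_colouring G c" "\<forall>v\<in>verts G. c v < chromatic_number G"
proof -
  have "finite (verts G)" and edges_card: "\<forall>e\<in>edges G. card e = 2"
    using assms unfolding graph_def by simp_all
  then obtain h where h: "bij_betw h (verts G) {0..<card (verts G)}"
    using ex_bij_betw_finite_nat by blast
  have "proper_colouring G h"
    unfolding proper_colouring_def
  proof (intro ballI impI)
    fix u v assume uv: "u \<in> verts G" "v \<in> verts G" "{u, v} \<in> edges G"
    then have "u \<noteq> v"
      using edges_card by fastforce
    then show "h u \<noteq> h v"
      using uv inj_on_eq_iff[OF bij_betw_imp_inj_on[OF h]] by simp
  qed
  moreover have "\<forall>v\<in>verts G. h v < card (verts G)"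
    using bij_betw_apply[OF h] by simp
  ultimately have "\<exists>k. \<exists>c :: 'a \<Rightarrow> nat. proper_colouring G c \<and> (\<forall>v\<in>verts G. c v < k)"
    by blast
  then have "\<exists>c :: 'a \<Rightarrow> nat. proper_colouring G c \<and> (\<forall>v\<in>verts G. c v < chromatic_number G)"
    unfolding chromatic_number_def by (rule LeastI_ex)
  then show thesis
    using that by (elim exE conjE)
qed

lemma complement_colour_class_clique:
  assumes "proper_colouring (complement \<Gamma>) c" "u \<in> verts \<Gamma>" "v \<in> verts \<Gamma>" "u \<noteq> v" "c u = c v"
  shows "{u, v} \<in> edges \<Gamma>"
  using assms unfolding proper_colouring_def complement_def by auto

lemma num_edges_mult_le_ex_prop_P_ind_free:
  assumes "graph H" "graph \<Gamma>" "graph G"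
    and cliques: "\<And>u v. u \<in> verts \<Gamma> \<Longrightarrow> v \<in> verts \<Gamma> \<Longrightarrow> u \<noteq> v \<Longrightarrow> c u = c v \<Longrightarrow> {u, v} \<in> edges \<Gamma>"
    and "c ` verts \<Gamma> \<subseteq> verts G" "\<forall>Q\<in>F_fam H. \<not> contains_subgraph G Q"
  shows "num_edges \<Gamma> * num_edges G \<le> 2 * ex_prop \<Gamma> (P_ind_free H) * (card (verts G) choose 2)"
proof -
  obtain B where B: "graph B" "subgraph_of B G" "bipartite B" "num_edges G \<le> 2 * num_edges B"
    using exists_bipartite_subgraph_half_edges[OF assms(3)] .
  have "finite (verts G)" "\<forall>e\<in>edges B. e \<subseteq> verts G \<and> card e = 2"
    using assms(3) B(1,2) unfolding graph_def subgraph_of_def by auto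
  then obtain \<sigma> where \<sigma>: "\<sigma> permutes verts G" and
    large: "num_edges \<Gamma> * num_edges B \<le> num_edges (pattern_subgraph \<Gamma> (\<sigma> \<circ> c) B) * (card (verts G) choose 2)"
    using exists_permutes_large_pattern_subgraph[OF assms(2) _ assms(5)] by blast
  have "P_ind_free H (pattern_subgraph \<Gamma> (\<sigma> \<circ> c) B)"
  proof (rule P_ind_free_pattern_subgraph)
    show "(\<sigma> \<circ> c) ` verts \<Gamma> \<subseteq> verts B"
      using assms(5) B(2) permutes_image[OF \<sigma>] unfolding subgraph_of_def by auto
    show "\<forall>Q\<in>F_fam H. \<not> contains_subgraph B Q"
      using assms(6) B(2) contains_subgraph_subgraph_of by blast
    show "{u, v} \<in> edges \<Gamma>"
      if "u \<in> verts \<Gamma>" "v \<in> verts \<Gamma>" "u \<noteq> v" "(\<sigma> \<circ> c) u = (\<sigma> \<circ> c) v" for u v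
      using cliques that permutes_inj[OF \<sigma>] by (simp add: inj_eq)
  qed (use assms(1) B(3) in \<open>auto simp: graph_def\<close>)
  moreover have "graph (pattern_subgraph \<Gamma> (\<sigma> \<circ> c) B)" "subgraph_of (pattern_subgraph \<Gamma> (\<sigma> \<circ> c) B) \<Gamma>"
    using assms(2) unfolding graph_def subgraph_of_def pattern_subgraph_def by auto
  ultimately have "num_edges (pattern_subgraph \<Gamma> (\<sigma> \<circ> c) B) \<le> ex_prop \<Gamma> (P_ind_free H)"
    using num_edges_le_ex_prop assms(2) by blast
  then have half: "num_edges \<Gamma> * num_edges B \<le> ex_prop \<Gamma> (P_ind_free H) * (card (verts G) choose 2)"
    using large mult_le_mono1 order_trans by blast
  have "num_edges \<Gamma> * num_edges G \<le> num_edges \<Gamma> * (2 * num_edges B)"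
    using B(4) by (rule mult_le_mono2)
  also have "\<dots> \<le> 2 * (ex_prop \<Gamma> (P_ind_free H) * (card (verts G) choose 2))"
    using half by simp
  finally show ?thesis
    by (simp add: mult.assoc)
qed

theorem corollary2p4:
  fixes H :: "'a graph" and \<Gamma> :: "'b graph"
  assumes "graph H" and "graph \<Gamma>"
  shows "real (ex_prop \<Gamma> (P_ind_free H)) \<ge>
           (1/2) * real (num_edges \<Gamma>)
             * real (ex_fam (chromatic_number (complement \<Gamma>)) (F_fam H))
             / real (chromatic_number (complement \<Gamma>) choose 2)"
proof (cases "ex_fam (chromatic_number (complement \<Gamma>)) (F_fam H) = 0")
  case False
  define k where "k = chromatic_number (complement \<Gamma>)"
  have "graph (complement \<Gamma>)"
    using assms(2) graph_complement unfolding graph_def by blast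
  then obtain c where c: "proper_colouring (complement \<Gamma>) c" "\<forall>v\<in>verts \<Gamma>. c v < k"
    unfolding k_def by (metis exists_chromatic_colouring verts_complement)
  obtain G :: "nat graph" where G: "graph G" "verts G = {1..k}" "\<forall>Q\<in>F_fam H. \<not> contains_subgraph G Q"
    "num_edges G = ex_fam k (F_fam H)"
    using ex_fam_attained False unfolding k_def by blast
  have "num_edges \<Gamma> * num_edges G \<le> 2 * ex_prop \<Gamma> (P_ind_free H) * (card (verts G) choose 2)"
    using c G by (intro num_edges_mult_le_ex_prop_P_ind_free[where c = "Suc \<circ> c"] assms)
      (auto simp: complement_colour_class_clique[OF c(1)] Suc_le_eq)
  then have "real (num_edges \<Gamma>) * real (ex_fam k (F_fam H)) \<le> 2 * real (ex_prop \<Gamma> (P_ind_free H)) * real (k choose 2)"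
    using G(2,4) by (metis card_atLeastAtMost diff_Suc_1 of_nat_le_iff of_nat_mult of_nat_numeral)
  \<comment> \<open>for k < 2 the binomial coefficient is 0, and so is the right-hand side (x / 0 = 0)\<close>
  then show ?thesis
    unfolding k_def[symmetric] by (cases "k < 2") (simp_all add: binomial_eq_0 field_simps)
qed simp

end
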